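(* Let $k\in\mathbb{N}$ and let $u=a_1\cdots a_n$ (with letters $a_i$ of a totally ordered finite alphabet $A$) be a word of minimal length within its $\sim_k$-class. Suppose the attributes $(x_i,y_i)$ of $u$ satisfy, for all positions $i<n$: if $(x_i,y_i)=(x_{i+1},y_{i+1})$ and $x_i+y_i=k+1$, then $a_i\le a_{i+1}$. Then $u$ is the shortlex normal form of its $\sim_k$-class.
   Context: $u\sim_k v$ iff $u,v$ have the same scattered subwords of length at most $k$. For words of equal length, $u$ is lexicographically smaller than $v$ if for some word $p$ and letters $a<b$, $pa$ is a prefix of $u$ and $pb$ a prefix of $v$. The shortlex normal form of the $\sim_k$-class of $u$ is the lexicographically smallest word among the shortest words $w$ with $w\sim_k u$. An X-ranker is a nonempty word over $\{\mathsf X_a : a\in A\}$, a Y-ranker a nonempty word over $\{\mathsf Y_a:a\in A\}$, length = word length. For a word $w$: $\mathsf X_a(w)$ is the smallest $a$-position, $r\mathsf X_a(w)$ the smallest $a$-position greater than $r(w)$; $\mathsf Y_a(w)$ the greatest $a$-position, $r\mathsf Y_a(w)$ the greatest $a$-position smaller than $r(w)$ (possibly undefined). The attribute of position $p$ of $u$ is $(x_p,y_p)$, $x_p$ (resp. $y_p$) the minimal length of an X-ranker (resp. Y-ranker) reaching $p$ in $u$. *)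

theory Defs
  imports "HOL-Library.Sublist"
begin

text \<open>Words are lists over a linearly ordered type of letters; positions are 0-indexed.\<close>

definition sim_k :: "nat \<Rightarrow> 'a list \<Rightarrow> 'a list \<Rightarrow> bool" where
  "sim_k k u v \<longleftrightarrow> (\<forall>w. length w \<le> k \<longrightarrow> (subseq w u \<longleftrightarrow> subseq w v))"

definition lex_less :: "'a::linorder list \<Rightarrow> 'a list \<Rightarrow> bool" where
  "lex_less u v \<longleftrightarrow> (\<exists>p a b s t. a < b \<and> u = p @ a # s \<and> v = p @ b # t)"

definition is_shortlex_nf :: "nat \<Rightarrow> 'a::linorder list \<Rightarrow> 'a list \<Rightarrow> bool" where
  "is_shortlex_nf k u w \<longleftrightarrow> sim_k k w u
     \<and> (\<forall>v. sim_k k v u \<longrightarrow> length w \<le> length v)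
     \<and> (\<forall>v. sim_k k v u \<and> length v = length w \<longrightarrow> v = w \<or> lex_less w v)"

definition next_pos :: "'a list \<Rightarrow> nat \<Rightarrow> 'a \<Rightarrow> nat option" where
  "next_pos w lb a = (if \<exists>p. lb \<le> p \<and> p < length w \<and> w ! p = a
     then Some (LEAST p. lb \<le> p \<and> p < length w \<and> w ! p = a) else None)"

definition prev_pos :: "'a list \<Rightarrow> nat \<Rightarrow> 'a \<Rightarrow> nat option" where
  "prev_pos w ub a = (if \<exists>p. p < ub \<and> p < length w \<and> w ! p = a
     then Some (GREATEST p. p < ub \<and> p < length w \<and> w ! p = a) else None)"

text \<open>An X-ranker X_{a1}...X_{am} is represented by the nonempty
  letter list [a1,...,am], evaluated left to right: X_{a1}(w) is the first a1-position,
  r X_a (w) is the first a-position strictly after r(w). Dually for Y-rankers.\<close>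
fun xrun :: "'a list \<Rightarrow> nat \<Rightarrow> 'a list \<Rightarrow> nat option" where
  "xrun w lb [] = None"
| "xrun w lb [a] = next_pos w lb a"
| "xrun w lb (a # b # rs) = (case next_pos w lb a of None \<Rightarrow> None | Some p \<Rightarrow> xrun w (Suc p) (b # rs))"

fun yrun :: "'a list \<Rightarrow> nat \<Rightarrow> 'a list \<Rightarrow> nat option" where
  "yrun w ub [] = None"
| "yrun w ub [a] = prev_pos w ub a"
| "yrun w ub (a # b # rs) = (case prev_pos w ub a of None \<Rightarrow> None | Some p \<Rightarrow> yrun w p (b # rs))"

definition xranker :: "'a list \<Rightarrow> 'a list \<Rightarrow> nat option" where
  "xranker r w = xrun w 0 r"

definition yranker :: "'a list \<Rightarrow> 'a list \<Rightarrow> nat option" where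
  "yranker r w = yrun w (length w) r"

definition x_attr :: "'a list \<Rightarrow> nat \<Rightarrow> nat" where
  "x_attr u p = (LEAST n. \<exists>r. r \<noteq> [] \<and> length r = n \<and> xranker r u = Some p)"

definition y_attr :: "'a list \<Rightarrow> nat \<Rightarrow> nat" where
  "y_attr u p = (LEAST n. \<exists>r. r \<noteq> [] \<and> length r = n \<and> yranker r u = Some p)"

end

theory Submission
  imports Defs
begin

(* An X-ranker r reaches position x of w exactly when take (Suc x) w is the shortest prefix of w
   containing r as a subword, and dually for Y-rankers.  Hence whether an X-ranker r lands
   before a Y-ranker s is witnessed by the subword r @ rev s, so it is the same in
   \<sim>_k-equivalent words whenever length r + length s \<le> k.  A subword that cannot avoid
   position l splits into an X-ranker reaching l followed by a reversed Y-ranker reaching l, so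
   it has length at least x_l + y_l - 1; hence a position with x_l + y_l > k + 1 can be deleted
   within the \<sim>_k-class, and in a shortest word x + y \<le> k + 1 everywhere.

   Now let v \<sim>_k u be a second shortest word of the same length, first differing from u at
   position i, with letter a in u and b in v.  A shortest X-ranker reaching i in v reaches in u a
   position j > i carrying b.  Comparing X- and Y-rankers of total length at most k in u and v
   shows that all positions i, ..., j of u have the attribute (X, k + 1 - X) with X = x_i(v).
   The hypothesis then yields a = u_i \<le> u_(i+1) \<le> ... \<le> u_j = b, so u is
   lexicographically smaller than v. *)

lemma subseq_take_mono: "subseq z (take m w) \<Longrightarrow> m \<le> n \<Longrightarrow> subseq z (take n w)"
proof -
  assume "subseq z (take m w)" "m \<le> n"
  moreover have "prefix (take m w) (take n w)"
    using \<open>m \<le> n\<close> by (metis min.absorb1 take_is_prefix take_take)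
  ultimately show ?thesis by (meson prefix_imp_subseq subseq_order.trans)
qed

lemma subseq_drop_antimono: "subseq z (drop n w) \<Longrightarrow> m \<le> n \<Longrightarrow> subseq z (drop m w)"
proof -
  assume "subseq z (drop n w)" "m \<le> n"
  moreover have "suffix (drop n w) (drop m w)"
    using \<open>m \<le> n\<close> by (metis drop_drop le_add_diff_inverse2 suffix_drop)
  ultimately show ?thesis by (meson suffix_imp_subseq subseq_order.trans)
qed

lemma subseq_append_take_drop:
  assumes "subseq (xs @ ys) w"
  obtains n where "subseq xs (take n w)" and "subseq ys (drop n w)"
proof -
  obtain us vs where "w = us @ vs" "subseq xs us" "subseq ys vs"
    using list_emb_appendD[OF assms] by blast
  then show thesis by (intro that[of "length us"]) simp_all
qed

lemma subseq_imp_subset: "subseq xs ys \<Longrightarrow> set xs \<subseteq> set ys"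
  by (auto elim: list_emb_set)

lemma subseq_Cons_skip:
  "a \<notin> set ys \<Longrightarrow> subseq (a # z) (ys @ a # zs) \<longleftrightarrow> subseq z zs"
  by (induct ys) auto

lemma subseq_snoc_skip:
  assumes "a \<notin> set zs" shows "subseq (z @ [a]) (ys @ a # zs) \<longleftrightarrow> subseq z ys"
proof
  assume "subseq (z @ [a]) (ys @ a # zs)"
  then obtain z1 z2 where z: "z @ [a] = z1 @ z2" "subseq z1 (ys @ [a])" "subseq z2 zs"
    by (metis append.assoc append_Cons append_Nil subseq_appendE)
  have "z2 = []"
  proof (rule ccontr)
    assume "z2 \<noteq> []"
    then have "a \<in> set z2" using z(1) by (metis last_appendR last_in_set last_snoc)
    then show False using z(3) assms subseq_imp_subset by blast
  qed
  then show "subseq z ys" using z by (metis append_Nil2 subseq_append)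
next
  assume "subseq z ys"
  then have "subseq (z @ [a]) (ys @ [a])" by simp
  then show "subseq (z @ [a]) (ys @ a # zs)"
    by (metis append.assoc append_Cons append_Nil subseq_rev_drop_many)
qed

lemma in_set_drop_take_iff:
  "a \<in> set (drop m (take n w)) \<longleftrightarrow> (\<exists>q. m \<le> q \<and> q < n \<and> q < length w \<and> w ! q = a)"
proof
  assume "a \<in> set (drop m (take n w))"
  then obtain i where i: "i < length (drop m (take n w))" "drop m (take n w) ! i = a"
    by (auto simp: in_set_conv_nth)
  moreover have "m \<le> length (take n w)" using i(1) by (simp only: length_drop)
  then have "drop m (take n w) ! i = take n w ! (m + i)" by (rule nth_drop)
  ultimately show "\<exists>q. m \<le> q \<and> q < n \<and> q < length w \<and> w ! q = a"
    by (intro exI[of _ "m + i"]) auto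
next
  assume "\<exists>q. m \<le> q \<and> q < n \<and> q < length w \<and> w ! q = a"
  then obtain q where "m \<le> q" "q < n" "q < length w" "w ! q = a" by blast
  then have "drop m (take n w) ! (q - m) = a" "q - m < length (drop m (take n w))" by auto
  then show "a \<in> set (drop m (take n w))" by (metis nth_mem)
qed

lemma drop_take_split_nth:
  assumes "m \<le> q" "q < n" "q < length w"
  shows "drop m (take n w) = drop m (take q w) @ w ! q # drop (Suc q) (take n w)"
proof -
  have "take n w = take q w @ drop q (take n w)"
    using assms by (metis append_take_drop_id min.absorb1 less_imp_le_nat take_take)
  moreover have "drop q (take n w) = w ! q # drop (Suc q) (take n w)"
    using assms by (metis Cons_nth_drop_Suc length_take min_less_iff_conj nth_take)
  ultimately have "take n w = take q w @ w ! q # drop (Suc q) (take n w)" by simp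
  then have "drop m (take n w) = drop m (take q w @ w ! q # drop (Suc q) (take n w))" by simp
  also have "\<dots> = drop m (take q w) @ w ! q # drop (Suc q) (take n w)"
    using assms by (simp add: drop_append)
  finally show ?thesis .
qed

lemma next_pos_eq_Some_iff:
  "next_pos w lb a = Some x \<longleftrightarrow>
     lb \<le> x \<and> x < length w \<and> w ! x = a \<and> (\<forall>q. lb \<le> q \<and> q < x \<longrightarrow> w ! q \<noteq> a)"
  (is "_ \<longleftrightarrow> ?rhs")
proof
  assume h: "next_pos w lb a = Some x"
  let ?P = "\<lambda>p. lb \<le> p \<and> p < length w \<and> w ! p = a"
  have ex: "\<exists>p. ?P p" using h unfolding next_pos_def by (simp split: if_splits; blast)
  have x: "x = (LEAST p. ?P p)" using h unfolding next_pos_def by (simp split: if_splits)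
  have "?P x" using LeastI_ex[OF ex] x by simp
  moreover have "\<forall>q. lb \<le> q \<and> q < x \<longrightarrow> w ! q \<noteq> a"
  proof (intro allI impI notI)
    fix q assume q: "lb \<le> q \<and> q < x" "w ! q = a"
    then have "?P q" using \<open>?P x\<close> by auto
    then have "x \<le> q" unfolding x by (rule Least_le)
    then show False using q by simp
  qed
  ultimately show ?rhs by blast
next
  assume h: ?rhs
  let ?P = "\<lambda>p. lb \<le> p \<and> p < length w \<and> w ! p = a"
  have L: "(LEAST p. ?P p) = x"
  proof (rule Least_equality)
    show "?P x" using h by blast
    fix y assume y: "?P y" show "x \<le> y"
    proof (rule ccontr)
      assume "\<not> x \<le> y"
      then have "y < x" by simp
      then show False using h y by blast
    qed
  qed
  have ex: "\<exists>p. ?P p" using h by blast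
  have "next_pos w lb a = Some (LEAST p. ?P p)" unfolding next_pos_def using ex by simp
  then show "next_pos w lb a = Some x" using L by simp
qed

lemma prev_pos_eq_Some_iff:
  "prev_pos w ub a = Some y \<longleftrightarrow>
     y < ub \<and> y < length w \<and> w ! y = a \<and> (\<forall>q. y < q \<and> q < ub \<and> q < length w \<longrightarrow> w ! q \<noteq> a)"
  (is "_ \<longleftrightarrow> ?rhs")
proof
  assume h: "prev_pos w ub a = Some y"
  let ?P = "\<lambda>p. p < ub \<and> p < length w \<and> w ! p = a"
  have ex: "\<exists>p. ?P p" using h unfolding prev_pos_def by (simp split: if_splits; blast)
  then obtain p where p: "?P p" by blast
  have y: "y = (GREATEST p. ?P p)" using h unfolding prev_pos_def by (simp split: if_splits)
  have bound: "\<forall>p. ?P p \<longrightarrow> p \<le> length w" by auto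
  have "?P y" using GreatestI_nat[of ?P p "length w"] p bound y by blast
  moreover have "\<forall>q. y < q \<and> q < ub \<and> q < length w \<longrightarrow> w ! q \<noteq> a"
  proof (intro allI impI notI)
    fix q assume q: "y < q \<and> q < ub \<and> q < length w" "w ! q = a"
    then have "?P q" by auto
    then have "q \<le> y" unfolding y using Greatest_le_nat[of ?P q "length w"] bound by blast
    then show False using q by simp
  qed
  ultimately show ?rhs by blast
next
  assume h: ?rhs
  let ?P = "\<lambda>p. p < ub \<and> p < length w \<and> w ! p = a"
  have L: "(GREATEST p. ?P p) = y"
  proof (rule Greatest_equality)
    show "?P y" using h by blast
    fix z assume z: "?P z" show "z \<le> y"
    proof (rule ccontr)
      assume "\<not> z \<le> y"
      then have "y < z" by simp
      then show False using h z by blast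
    qed
  qed
  have ex: "\<exists>p. ?P p" using h by blast
  have "prev_pos w ub a = Some (GREATEST p. ?P p)" unfolding prev_pos_def using ex by simp
  then show "prev_pos w ub a = Some y" using L by simp
qed

lemma next_pos_eq_None_iff:
  "next_pos w lb a = None \<longleftrightarrow> \<not> (\<exists>p. lb \<le> p \<and> p < length w \<and> w ! p = a)"
  unfolding next_pos_def by (simp; blast)

lemma prev_pos_eq_None_iff:
  "prev_pos w ub a = None \<longleftrightarrow> \<not> (\<exists>p. p < ub \<and> p < length w \<and> w ! p = a)"
  unfolding prev_pos_def by (simp; blast)

lemma subseq_Cons_drop_take_iff:
  assumes "z \<noteq> []"
  shows "subseq (a # z) (drop m (take n w)) \<longleftrightarrow>
    (\<exists>p. next_pos w m a = Some p \<and> subseq z (drop (Suc p) (take n w)))"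
proof (cases "next_pos w m a")
  case None
  then have "a \<notin> set (drop m (take n w))"
    by (auto simp: in_set_drop_take_iff next_pos_eq_None_iff)
  then show ?thesis using None by (auto dest!: subseq_imp_subset)
next
  case (Some p)
  then have p: "m \<le> p" "p < length w" "w ! p = a" "\<forall>q. m \<le> q \<and> q < p \<longrightarrow> w ! q \<noteq> a"
    by (auto simp: next_pos_eq_Some_iff)
  show ?thesis
  proof (cases "p < n")
    case True
    have "a \<notin> set (drop m (take p w))" using p by (auto simp: in_set_drop_take_iff)
    moreover have "drop m (take n w) = drop m (take p w) @ a # drop (Suc p) (take n w)"
      using p True drop_take_split_nth by metis
    ultimately show ?thesis using Some subseq_Cons_skip by simp
  next
    case False
    then have "a \<notin> set (drop m (take n w))" using p by (auto simp: in_set_drop_take_iff)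
    moreover have "drop (Suc p) (take n w) = []" using False by simp
    ultimately show ?thesis using Some assms by (auto dest!: subseq_imp_subset)
  qed
qed

lemma subseq_snoc_drop_take_iff:
  assumes "z \<noteq> []"
  shows "subseq (z @ [a]) (drop m (take n w)) \<longleftrightarrow>
    (\<exists>p. prev_pos w n a = Some p \<and> subseq z (drop m (take p w)))"
proof (cases "prev_pos w n a")
  case None
  then have "a \<notin> set (drop m (take n w))"
    by (auto simp: in_set_drop_take_iff prev_pos_eq_None_iff)
  then show ?thesis using None by (auto dest!: subseq_imp_subset)
next
  case (Some p)
  then have p: "p < n" "p < length w" "w ! p = a"
      "\<forall>q. p < q \<and> q < n \<and> q < length w \<longrightarrow> w ! q \<noteq> a"
    by (auto simp: prev_pos_eq_Some_iff)
  show ?thesis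
  proof (cases "m \<le> p")
    case True
    have "a \<notin> set (drop (Suc p) (take n w))" using p by (auto simp: in_set_drop_take_iff)
    moreover have "drop m (take n w) = drop m (take p w) @ a # drop (Suc p) (take n w)"
      using p True drop_take_split_nth by metis
    ultimately show ?thesis using Some subseq_snoc_skip by simp
  next
    case False
    then have "a \<notin> set (drop m (take n w))" using p by (auto simp: in_set_drop_take_iff)
    moreover have "drop m (take p w) = []" using False by simp
    ultimately show ?thesis using Some assms by (auto dest!: subseq_imp_subset)
  qed
qed

lemma xrun_eq_Some_iff:
  "xrun w m r = Some x \<longleftrightarrow> r \<noteq> [] \<and> x < length w \<and>
     subseq r (drop m (take (Suc x) w)) \<and> \<not> subseq r (drop m (take x w))"
proof (induction w m r arbitrary: x rule: xrun.induct)
  case (2 w m a)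
  show ?case
    by (auto simp: next_pos_eq_Some_iff subseq_singleton_left in_set_drop_take_iff less_Suc_eq)
next
  case (3 w m a b rs)
  then show ?case by (cases "next_pos w m a") (simp_all add: subseq_Cons_drop_take_iff)
qed simp

lemma yrun_eq_Some_iff:
  "yrun w n r = Some y \<longleftrightarrow> r \<noteq> [] \<and> y < length w \<and>
     subseq (rev r) (drop y (take n w)) \<and> \<not> subseq (rev r) (drop (Suc y) (take n w))"
proof (induction w n r arbitrary: y rule: yrun.induct)
  case (2 w n a)
  show ?case
    by (auto simp: prev_pos_eq_Some_iff subseq_singleton_left in_set_drop_take_iff Suc_le_eq)
next
  case (3 w n a b rs)
  have "rev (b # rs) \<noteq> []" by simp
  from 3 subseq_snoc_drop_take_iff[OF this, of a] show ?case by (cases "prev_pos w n a") simp_all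
qed simp

lemma xranker_eq_Some_iff:
  "xranker r w = Some x \<longleftrightarrow>
     r \<noteq> [] \<and> x < length w \<and> subseq r (take (Suc x) w) \<and> \<not> subseq r (take x w)"
  unfolding xranker_def by (simp add: xrun_eq_Some_iff)

lemma yranker_eq_Some_iff:
  "yranker r w = Some y \<longleftrightarrow>
     r \<noteq> [] \<and> y < length w \<and> subseq (rev r) (drop y w) \<and> \<not> subseq (rev r) (drop (Suc y) w)"
  unfolding yranker_def by (simp add: yrun_eq_Some_iff)

lemma xranker_less:
  "xranker r w = Some x \<Longrightarrow> subseq r (take n w) \<Longrightarrow> x < n"
  by (metis xranker_eq_Some_iff not_less subseq_take_mono)

lemma yranker_ge:
  "yranker r w = Some y \<Longrightarrow> subseq (rev r) (drop n w) \<Longrightarrow> n \<le> y"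
  by (metis yranker_eq_Some_iff not_less_eq_eq subseq_drop_antimono)

lemma xranker_subseq_take: "xranker r w = Some x \<Longrightarrow> subseq r (take (Suc x) w)"
  by (simp add: xranker_eq_Some_iff)

lemma yranker_subseq_drop: "yranker r w = Some y \<Longrightarrow> subseq (rev r) (drop y w)"
  by (simp add: yranker_eq_Some_iff)

lemma xranker_subseq: "xranker r w = Some x \<Longrightarrow> subseq r w"
  by (metis xranker_subseq_take prefix_imp_subseq subseq_order.trans take_is_prefix)

lemma yranker_subseq: "yranker r w = Some y \<Longrightarrow> subseq (rev r) w"
  by (metis yranker_subseq_drop suffix_imp_subseq subseq_order.trans suffix_drop)

lemma xranker_exists:
  assumes "r \<noteq> []" "subseq r w"
  obtains x where "xranker r w = Some x"
proof -
  obtain x where "x < length w" "\<not> subseq r (take x w)" "subseq r (take (Suc x) w)"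
    using ex_least_nat_less[of "\<lambda>n. subseq r (take n w)" "length w"] assms by auto
  then show thesis using assms(1) by (intro that[of x]) (simp add: xranker_eq_Some_iff)
qed

lemma yranker_exists:
  assumes "r \<noteq> []" "subseq (rev r) w"
  obtains y where "yranker r w = Some y"
proof -
  obtain d where d: "d < length w" "\<not> subseq (rev r) (drop (length w - d) w)"
      "subseq (rev r) (drop (length w - Suc d) w)"
    using ex_least_nat_less[of "\<lambda>d. subseq (rev r) (drop (length w - d) w)" "length w"] assms
    by auto
  moreover have "Suc (length w - Suc d) = length w - d" using d(1) by simp
  ultimately show thesis using assms(1)
    by (intro that[of "length w - Suc d"]) (simp add: yranker_eq_Some_iff)
qed

lemma xrun_last: "xrun w m r = Some x \<Longrightarrow> w ! x = last r"
  by (induction w m r rule: xrun.induct) (auto simp: next_pos_eq_Some_iff split: option.splits)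

lemma yrun_last: "yrun w n r = Some y \<Longrightarrow> w ! y = last r"
  by (induction w n r rule: yrun.induct) (auto simp: prev_pos_eq_Some_iff split: option.splits)

lemma xranker_last: "xranker r w = Some x \<Longrightarrow> w ! x = last r"
  unfolding xranker_def by (rule xrun_last)

lemma yranker_last: "yranker r w = Some y \<Longrightarrow> w ! y = last r"
  unfolding yranker_def by (rule yrun_last)

lemma xranker_append_same_prefix:
  assumes "xranker r (p @ w) = Some x" "x < length p"
  shows "xranker r (p @ w') = Some x"
proof -
  have "take (Suc x) (p @ w) = take (Suc x) (p @ w')" "take x (p @ w) = take x (p @ w')"
    using assms(2) by simp_all
  then show ?thesis using assms by (simp add: xranker_eq_Some_iff)
qed

lemma subseq_xranker_append_rev_yranker_iff:
  assumes "xranker r w = Some x" "yranker s w = Some y"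
  shows "subseq (r @ rev s) w \<longleftrightarrow> x < y"
proof
  assume "subseq (r @ rev s) w"
  then obtain n where "subseq r (take n w)" "subseq (rev s) (drop n w)"
    by (rule subseq_append_take_drop)
  then show "x < y" using xranker_less[OF assms(1)] yranker_ge[OF assms(2)] by fastforce
next
  assume "x < y"
  then have "subseq (rev s) (drop (Suc x) w)"
    by (intro subseq_drop_antimono[OF yranker_subseq_drop[OF assms(2)]]) simp
  with xranker_subseq_take[OF assms(1)] have "subseq (r @ rev s) (take (Suc x) w @ drop (Suc x) w)"
    by (rule list_emb_append_mono)
  then show "subseq (r @ rev s) w" by simp
qed

lemma x_attr_witness:
  assumes "l < length w"
  obtains r where "xranker r w = Some l" and "length r = x_attr w l"
proof -
  let ?P = "\<lambda>n. \<exists>r. r \<noteq> [] \<and> length r = n \<and> xranker r w = Some l"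
  have "xranker (take (Suc l) w) w = Some l"
    using assms by (auto simp: xranker_eq_Some_iff not_subseq_length)
  then have "?P (Suc l)" using assms by (intro exI[of _ "take (Suc l) w"]) auto
  then have "?P (x_attr w l)" unfolding x_attr_def by (rule LeastI)
  then show thesis using that by blast
qed

lemma y_attr_witness:
  assumes "l < length w"
  obtains r where "yranker r w = Some l" and "length r = y_attr w l"
proof -
  let ?P = "\<lambda>n. \<exists>r. r \<noteq> [] \<and> length r = n \<and> yranker r w = Some l"
  have "yranker (rev (drop l w)) w = Some l"
    using assms by (simp add: yranker_eq_Some_iff not_subseq_length)
  then have "?P (length w - l)" using assms by (intro exI[of _ "rev (drop l w)"]) auto
  then have "?P (y_attr w l)" unfolding y_attr_def by (rule LeastI)
  then show thesis using that by blast
qed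

lemma x_attr_le: "xranker r w = Some l \<Longrightarrow> x_attr w l \<le> length r"
  unfolding x_attr_def by (rule Least_le) (auto simp: xranker_eq_Some_iff)

lemma y_attr_le: "yranker r w = Some l \<Longrightarrow> y_attr w l \<le> length r"
  unfolding y_attr_def by (rule Least_le) (auto simp: yranker_eq_Some_iff)

lemma y_attr_pos: "l < length w \<Longrightarrow> 0 < y_attr w l"
  by (metis y_attr_witness yranker_eq_Some_iff length_greater_0_conv)

lemma subseq_drop_longest_prefix:
  assumes "subseq z (xs @ ys)"
    and longest: "\<And>m'. m' \<le> length z \<Longrightarrow> subseq (take m' z) xs \<Longrightarrow> m' \<le> m"
  shows "subseq (drop m z) ys"
proof -
  obtain z1 z2 where z12: "z = z1 @ z2" "subseq z1 xs" "subseq z2 ys"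
    using assms(1) by (rule subseq_appendE)
  then have "length z1 \<le> m" using longest[of "length z1"] by simp
  then have "suffix (drop m z) z2" using z12(1) by (simp add: suffix_drop)
  then show ?thesis using z12(3) by (meson suffix_imp_subseq subseq_order.trans)
qed

lemma attr_sum_le_if_nth_needed:
  assumes l: "l < length u"
    and prefix: "subseq (take m z) (take l u)" and longest: "\<not> subseq (take (Suc m) z) (take l u)"
    and tail: "subseq (drop m z) (drop l u)" and not_tail: "\<not> subseq (drop m z) (drop (Suc l) u)"
  shows "x_attr u l + y_attr u l \<le> length z + 1"
proof -
  have split_l: "drop l u = u ! l # drop (Suc l) u" using l by (rule Cons_nth_drop_Suc[symmetric])
  obtain z2 where z2: "drop m z = u ! l # z2"
    using tail not_tail unfolding split_l by (cases "drop m z") (auto split: if_splits)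
  then have "m < length z" by (cases "m < length z") auto
  have "take (Suc m) z = take m z @ take 1 (drop m z)" by (metis Suc_eq_plus1 take_add)
  then have take_Suc: "take (Suc m) z = take m z @ [u ! l]" using z2 by simp
  have "xranker (take m z @ [u ! l]) u = Some l"
    using l prefix longest take_Suc by (simp add: xranker_eq_Some_iff take_Suc_conv_app_nth)
  then have "x_attr u l \<le> m + 1" using x_attr_le \<open>m < length z\<close> by fastforce
  moreover have "yranker (rev (drop m z)) u = Some l"
    using tail not_tail l z2 by (simp add: yranker_eq_Some_iff)
  then have "y_attr u l \<le> length z - m" using y_attr_le by fastforce
  ultimately show ?thesis using \<open>m < length z\<close> by linarith
qed

lemma subseq_delete_nth:
  assumes z: "subseq z u" and l: "l < length u"
    and short: "length z + 1 < x_attr u l + y_attr u l"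
  shows "subseq z (take l u @ drop (Suc l) u)"
proof -
  let ?P = "\<lambda>m. m \<le> length z \<and> subseq (take m z) (take l u)"
  define m where "m = (GREATEST m. ?P m)"
  have bound: "\<forall>m. ?P m \<longrightarrow> m \<le> length z" by simp
  have "?P 0" by simp
  then have m: "?P m" unfolding m_def using GreatestI_nat[of ?P 0 "length z"] bound by blast
  have m_max: "m' \<le> m" if "?P m'" for m'
    unfolding m_def using Greatest_le_nat[of ?P m'] bound that by blast
  have "subseq z (take l u @ drop l u)" using z by simp
  then have tail: "subseq (drop m z) (drop l u)"
    by (rule subseq_drop_longest_prefix) (simp add: m_max)
  have "subseq (drop m z) (drop (Suc l) u)"
  proof (rule ccontr)
    assume not_tail: "\<not> subseq (drop m z) (drop (Suc l) u)"
    then have "m < length z" by (cases "m < length z") auto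
    then have "\<not> subseq (take (Suc m) z) (take l u)" using m_max[of "Suc m"] by auto
    then show False
      using attr_sum_le_if_nth_needed[OF l conjunct2[OF m] _ tail not_tail] short by simp
  qed
  then have "subseq (take m z @ drop m z) (take l u @ drop (Suc l) u)"
    using m by (intro list_emb_append_mono) auto
  then show ?thesis by simp
qed

lemma sim_k_delete_nth:
  assumes "l < length u" and "k + 1 < x_attr u l + y_attr u l"
  shows "sim_k k (take l u @ drop (Suc l) u) u"
  unfolding sim_k_def
proof (intro allI impI iffI)
  fix z assume "subseq z (take l u @ drop (Suc l) u)"
  moreover have "subseq (drop (Suc l) u) (drop l u)"
    using subseq_drop_antimono[of "drop (Suc l) u" "Suc l" u l] by simp
  then have "subseq (take l u @ drop (Suc l) u) (take l u @ drop l u)"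
    by (intro list_emb_append_mono) simp_all
  ultimately show "subseq z u" by (metis append_take_drop_id subseq_order.trans)
next
  fix z assume "length z \<le> k" "subseq z u"
  then show "subseq z (take l u @ drop (Suc l) u)" using assms by (intro subseq_delete_nth) auto
qed

lemma shortest_attr_sum_le:
  assumes shortest: "\<forall>v. sim_k k v u \<longrightarrow> length u \<le> length v" and l: "l < length u"
  shows "x_attr u l + y_attr u l \<le> k + 1"
proof (rule ccontr)
  assume "\<not> ?thesis"
  then have "sim_k k (take l u @ drop (Suc l) u) u" using l by (intro sim_k_delete_nth) auto
  then have "length u \<le> length (take l u @ drop (Suc l) u)" using shortest by blast
  then show False using l by simp
qed

lemma sim_k_sym: "sim_k k u v \<Longrightarrow> sim_k k v u"
  unfolding sim_k_def by blast

lemma sim_k_trans: "sim_k k u v \<Longrightarrow> sim_k k v w \<Longrightarrow> sim_k k u w"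
  unfolding sim_k_def by blast

lemma sim_k_subseq_iff: "sim_k k u v \<Longrightarrow> length z \<le> k \<Longrightarrow> subseq z u \<longleftrightarrow> subseq z v"
  unfolding sim_k_def by blast

lemma sim_k_xranker_less_yranker_iff:
  assumes "sim_k k u v" and "length r + length s \<le> k"
    and "xranker r u = Some x" "yranker s u = Some y"
    and "xranker r v = Some x'" "yranker s v = Some y'"
  shows "x < y \<longleftrightarrow> x' < y'"
  using assms sim_k_subseq_iff[of k u v "r @ rev s"]
  by (simp add: subseq_xranker_append_rev_yranker_iff)

lemma sim_k_xranker_le_yranker:
  assumes sim: "sim_k k u v" and len: "length r + length s \<le> k + 1"
    and r: "xranker r v = Some q" and s: "yranker s v = Some q"
    and j: "xranker r u = Some j" and y: "yranker s u = Some y"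
  shows "j \<le> y"
proof -
  define c where "c = last s"
  have "s \<noteq> []" using s by (simp add: yranker_eq_Some_iff)
  then have rev_s: "rev s = c # rev (butlast s)"
    unfolding c_def by (metis append_butlast_last_id rev.simps(2) rev_rev_ident)
  have r_last: "last r = c" and v_q: "v ! q = c"
    using xranker_last[OF r] yranker_last[OF s] unfolding c_def by simp_all
  have "q < length v" using r by (simp add: xranker_eq_Some_iff)
  then have "drop q v = c # drop (Suc q) v" using v_q by (metis Cons_nth_drop_Suc)
  then have "subseq (rev (butlast s)) (drop (Suc q) v)"
    using yranker_subseq_drop[OF s] unfolding rev_s by simp
  with xranker_subseq_take[OF r]
  have "subseq (r @ rev (butlast s)) (take (Suc q) v @ drop (Suc q) v)"
    by (rule list_emb_append_mono)
  moreover have "length (r @ rev (butlast s)) \<le> k" using len \<open>s \<noteq> []\<close> by (cases s) simp_all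
  ultimately have "subseq (r @ rev (butlast s)) u" using sim_k_subseq_iff[OF sim] by simp
  then obtain n where "subseq r (take n u)" "subseq (rev (butlast s)) (drop n u)"
    by (rule subseq_append_take_drop)
  moreover have "j < n" using xranker_less[OF j] \<open>subseq r (take n u)\<close> .
  ultimately have "subseq (rev (butlast s)) (drop (Suc j) u)"
    by (auto intro: subseq_drop_antimono[of _ n])
  moreover have "j < length u" using j by (simp add: xranker_eq_Some_iff)
  then have "drop j u = c # drop (Suc j) u"
    using xranker_last[OF j] r_last by (metis Cons_nth_drop_Suc)
  ultimately have "subseq (rev s) (drop j u)" unfolding rev_s by simp
  then show "j \<le> y" by (rule yranker_ge[OF y])
qed

lemma lift_Suc_mono_le_between:
  fixes f :: "nat \<Rightarrow> 'a::order"
  assumes "i \<le> j" and "\<And>l. i \<le> l \<Longrightarrow> l < j \<Longrightarrow> f l \<le> f (Suc l)"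
  shows "f i \<le> f j"
  using assms by (induction j rule: dec_induct) (auto intro: order.trans)

locale first_difference =
  fixes k :: nat and u v p s t :: "'a::linorder list" and a b :: 'a
  assumes sim: "sim_k k u v"
    and u_eq: "u = p @ a # s" and v_eq: "v = p @ b # t" and letters_neq: "a \<noteq> b"
    and attr_sum_u: "\<And>l. l < length u \<Longrightarrow> x_attr u l + y_attr u l \<le> k + 1"
    and attr_sum_v: "\<And>l. l < length v \<Longrightarrow> x_attr v l + y_attr v l \<le> k + 1"

sublocale first_difference \<subseteq> swap: first_difference k v u p t s b a
  using sim_k_sym[OF sim] u_eq v_eq letters_neq attr_sum_u attr_sum_v
  by unfold_locales auto

context first_difference
begin

lemma difference_pos:
  "length p < length u" "u ! length p = a" "length p < length v" "v ! length p = b"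
  using u_eq v_eq by simp_all

lemma subseq_iff: "length z \<le> k \<Longrightarrow> subseq z u \<longleftrightarrow> subseq z v"
  using sim_k_subseq_iff[OF sim] .

lemma xranker_before_difference_iff:
  assumes "x < length p" shows "xranker r u = Some x \<longleftrightarrow> xranker r v = Some x"
  using assms unfolding u_eq v_eq by (metis xranker_append_same_prefix)

lemma xranker_passes_difference:
  assumes r: "xranker r v = Some (length p)" and short: "length r \<le> k"
  obtains j where "xranker r u = Some j" "length p < j" "u ! j = b"
proof -
  have "r \<noteq> []" using r by (simp add: xranker_eq_Some_iff)
  moreover have "subseq r u" using xranker_subseq[OF r] short subseq_iff by blast
  ultimately obtain j where j: "xranker r u = Some j" by (rule xranker_exists)
  have "u ! j = b" using xranker_last[OF j] xranker_last[OF r] difference_pos by simp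
  then have "j \<noteq> length p" using difference_pos letters_neq by auto
  moreover have "\<not> j < length p" using xranker_before_difference_iff j r by force
  ultimately show thesis using that j \<open>u ! j = b\<close> by simp
qed

lemma x_attr_le_k: "x_attr v (length p) \<le> k"
  using attr_sum_v[OF difference_pos(3)] y_attr_pos[OF difference_pos(3)] by simp

lemma shortest_xranker_at_difference:
  obtains r j where "xranker r v = Some (length p)" "length r = x_attr v (length p)"
    and "xranker r u = Some j" "length p < j" "u ! j = b"
proof -
  obtain r where r: "xranker r v = Some (length p)" "length r = x_attr v (length p)"
    using difference_pos by (metis x_attr_witness)
  moreover obtain j where "xranker r u = Some j" "length p < j" "u ! j = b"
    using xranker_passes_difference[OF r(1)] r(2) x_attr_le_k by metis
  ultimately show thesis by (rule that)
qed

lemma x_attr_ge_before: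
  assumes r: "xranker r v = Some (length p)" "length r = x_attr v (length p)"
    and j: "xranker r u = Some j" and l: "length p \<le> l" "l < j"
  shows "x_attr v (length p) \<le> x_attr u l"
proof (rule ccontr)
  assume less: "\<not> ?thesis"
  have "l < length u" using j l by (simp add: xranker_eq_Some_iff)
  then obtain \<rho> where \<rho>: "xranker \<rho> u = Some l" "length \<rho> = x_attr u l"
    by (rule x_attr_witness)
  obtain \<sigma> where \<sigma>: "yranker \<sigma> v = Some (length p)" "length \<sigma> = y_attr v (length p)"
    using difference_pos by (metis y_attr_witness)
  have sum: "length r + length \<sigma> \<le> k + 1" using attr_sum_v difference_pos r(2) \<sigma>(2) by simp
  then have short: "length \<rho> + length \<sigma> \<le> k" using less r(2) \<rho>(2) by simp
  have "subseq \<rho> v" using xranker_subseq[OF \<rho>(1)] short subseq_iff by simp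
  then obtain l' where l': "xranker \<rho> v = Some l'"
    using \<rho>(1) by (metis xranker_exists xranker_eq_Some_iff)
  have "subseq (rev \<sigma>) u" using yranker_subseq[OF \<sigma>(1)] short subseq_iff by simp
  then obtain y where y: "yranker \<sigma> u = Some y"
    using \<sigma>(1) by (metis yranker_exists yranker_eq_Some_iff)
  have "\<not> l' < length p" using xranker_before_difference_iff l' \<rho>(1) l by force
  then have "y \<le> l"
    using sim_k_xranker_less_yranker_iff[OF sim short \<rho>(1) y l' \<sigma>(1)] by simp
  moreover have "j \<le> y" using sim_k_xranker_le_yranker[OF sim sum r(1) \<sigma>(1) j y] .
  ultimately show False using l by simp
qed

lemma x_attr_le_length_of_diverging:
  assumes "xranker \<rho> v = Some l'" "l' \<le> length p" and "xranker \<rho> u = Some j" "length p < j"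
  shows "x_attr v (length p) \<le> length \<rho>"
proof (cases "l' = length p")
  case True
  then show ?thesis using x_attr_le assms(1) by simp
next
  case False
  then have "xranker \<rho> u = Some l'" using xranker_before_difference_iff assms(1,2) by simp
  then show ?thesis using assms(2-4) by simp
qed

lemma x_attr_ge_at:
  assumes r: "xranker r v = Some (length p)" "length r = x_attr v (length p)"
    and j: "xranker r u = Some j" "length p < j" "u ! j = b"
  shows "x_attr v (length p) \<le> x_attr u j"
proof (rule ccontr)
  assume less: "\<not> ?thesis"
  have "j < length u" using j by (simp add: xranker_eq_Some_iff)
  then obtain \<rho> where \<rho>: "xranker \<rho> u = Some j" "length \<rho> = x_attr u j"
    by (rule x_attr_witness)
  define \<rho>' where "\<rho>' = butlast \<rho>"
  have "\<rho> \<noteq> []" using \<rho>(1) by (simp add: xranker_eq_Some_iff)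
  then have \<rho>_snoc: "\<rho> = \<rho>' @ [b]" unfolding \<rho>'_def using xranker_last[OF \<rho>(1)] j(3) by simp
  have "subseq (\<rho>' @ [b]) (take j u @ [b])"
    using xranker_subseq_take[OF \<rho>(1)] \<open>j < length u\<close> j(3) \<rho>_snoc
    by (simp add: take_Suc_conv_app_nth)
  then have "subseq \<rho>' (take j u)" by simp
  have "subseq \<rho>' (take (length p) u)"
  proof (cases "\<rho>' = []")
    case False
    moreover have "subseq \<rho>' u"
      using subseq_take_mono[OF \<open>subseq \<rho>' (take j u)\<close>, of "length u"] \<open>j < length u\<close>
      by simp
    ultimately obtain x where x: "xranker \<rho>' u = Some x" by (rule xranker_exists)
    have "x < j" using xranker_less[OF x \<open>subseq \<rho>' (take j u)\<close>] .
    have "\<not> length p \<le> x"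
      using x_attr_ge_before[OF r(1,2) j(1) _ \<open>x < j\<close>] x_attr_le[OF x] less \<rho>(2) \<rho>_snoc by force
    then show ?thesis by (intro subseq_take_mono[OF xranker_subseq_take[OF x]]) simp
  qed simp
  then have "subseq \<rho> (take (Suc (length p)) v)"
    unfolding \<rho>_snoc using u_eq v_eq by simp
  then obtain l' where l': "xranker \<rho> v = Some l'" "l' \<le> length p"
    using \<open>\<rho> \<noteq> []\<close> subseq_take_mono
    by (metis less_Suc_eq_le xranker_exists xranker_less nat_le_linear take_all)
  then show False using x_attr_le_length_of_diverging[OF l' \<rho>(1) j(2)] less \<rho>(2) by simp
qed

lemma x_attr_le_at_difference: "x_attr v (length p) \<le> x_attr u (length p)"
proof -
  obtain r j where r: "xranker r v = Some (length p)" "length r = x_attr v (length p)"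
    and "xranker r u = Some j" "length p < j"
    by (rule shortest_xranker_at_difference)
  then show ?thesis using x_attr_ge_before[OF r] by simp
qed

end

(* Facts of a context block reach the swapped instance only in later blocks. *)
context first_difference
begin

lemma x_attr_at_difference: "x_attr u (length p) = x_attr v (length p)"
  using x_attr_le_at_difference swap.x_attr_le_at_difference by simp

lemma y_attr_ge_between:
  assumes r: "xranker r v = Some (length p)" "length r = x_attr v (length p)"
    and j: "xranker r u = Some j" "length p < j" and l: "length p \<le> l" "l \<le> j"
  shows "k + 1 - x_attr v (length p) \<le> y_attr u l"
proof (rule ccontr)
  assume less: "\<not> ?thesis"
  have "l < length u" using j l by (simp add: xranker_eq_Some_iff)
  then obtain \<sigma> where \<sigma>: "yranker \<sigma> u = Some l" "length \<sigma> = y_attr u l"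
    by (rule y_attr_witness)
  obtain r' where r': "xranker r' u = Some (length p)" "length r' = x_attr v (length p)"
    using difference_pos x_attr_at_difference by (metis x_attr_witness)
  have short: "length r + length \<sigma> \<le> k" "length r' + length \<sigma> \<le> k"
    using less r(2) r'(2) \<sigma>(2) by simp_all
  then obtain j' where j': "xranker r' v = Some j'" "length p < j'"
    using swap.xranker_passes_difference[OF r'(1)] by (metis le_add1 order.trans)
  have "subseq (rev \<sigma>) v" using yranker_subseq[OF \<sigma>(1)] short subseq_iff by simp
  then obtain l' where l': "yranker \<sigma> v = Some l'"
    using \<sigma>(1) by (metis yranker_exists yranker_eq_Some_iff)
  have "length p < l'"
  proof (cases "l = length p")
    case True
    then have "j' \<le> l'"
      using sim_k_xranker_le_yranker[OF swap.sim _ r'(1) _ j'(1) l'] short(2) \<sigma>(1) by simp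
    then show ?thesis using j'(2) by simp
  next
    case False
    then have "j' < l'"
      using sim_k_xranker_less_yranker_iff[OF sim short(2) r'(1) \<sigma>(1) j'(1) l'] l by simp
    then show ?thesis using j'(2) by simp
  qed
  then have "j < l"
    using sim_k_xranker_less_yranker_iff[OF sim short(1) j(1) \<sigma>(1) r(1) l'] by simp
  then show False using l by simp
qed

lemma attrs_constant_between:
  assumes r: "xranker r v = Some (length p)" "length r = x_attr v (length p)"
    and j: "xranker r u = Some j" "length p < j" "u ! j = b" and l: "length p \<le> l" "l \<le> j"
  shows "x_attr u l = x_attr v (length p)" and "x_attr u l + y_attr u l = k + 1"
proof -
  have "x_attr v (length p) \<le> x_attr u l"
    using x_attr_ge_before[OF r j(1) l(1)] x_attr_ge_at[OF r j] l(2) by (cases "l < j") auto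
  moreover have "k + 1 - x_attr v (length p) \<le> y_attr u l"
    using y_attr_ge_between[OF r j(1,2) l] .
  moreover have "x_attr u l + y_attr u l \<le> k + 1"
    using attr_sum_u j(1) l(2) by (simp add: xranker_eq_Some_iff)
  ultimately show "x_attr u l = x_attr v (length p)" and "x_attr u l + y_attr u l = k + 1"
    using x_attr_le_k by linarith+
qed

lemma difference_letter_le:
  assumes attr: "\<forall>i. Suc i < length u \<longrightarrow>
      (x_attr u i, y_attr u i) = (x_attr u (Suc i), y_attr u (Suc i))
      \<and> x_attr u i + y_attr u i = k + 1 \<longrightarrow> u ! i \<le> u ! Suc i"
  shows "a \<le> b"
proof -
  obtain r j where r: "xranker r v = Some (length p)" "length r = x_attr v (length p)"
    and j: "xranker r u = Some j" "length p < j" "u ! j = b"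
    by (rule shortest_xranker_at_difference)
  have "u ! l \<le> u ! Suc l" if "length p \<le> l" "l < j" for l
  proof -
    have "Suc l < length u" using j(1) that by (simp add: xranker_eq_Some_iff)
    then show ?thesis
      using attr attrs_constant_between[OF r j, of l] attrs_constant_between[OF r j, of "Suc l"] that
      by simp
  qed
  then have "u ! length p \<le> u ! j" using lift_Suc_mono_le_between[of "length p" j "(!) u"] j(2) by simp
  then show "a \<le> b" using difference_pos j(3) by simp
qed

end

lemma lex_less_Cons: "lex_less u v \<Longrightarrow> lex_less (x # u) (x # v)"
  unfolding lex_less_def by (metis append_Cons)

lemma lex_less_or_greater:
  fixes u v :: "'a::linorder list"
  assumes "length u = length v" and "u \<noteq> v"
  shows "lex_less u v \<or> lex_less v u"
  using assms
proof (induction u arbitrary: v)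
  case (Cons x u')
  then obtain y v' where v: "v = y # v'" by (cases v) auto
  show ?case
  proof (cases "x = y")
    case True
    then show ?thesis using Cons v lex_less_Cons by fastforce
  next
    case False
    then show ?thesis unfolding lex_less_def v by (metis append_Nil neq_iff)
  qed
qed simp

lemma first_difference_of_shortest:
  assumes shortest: "\<forall>w. sim_k k w u \<longrightarrow> length u \<le> length w"
    and v: "sim_k k v u" "length v = length u"
    and "u = p @ a # s" "v = p @ b # t" "a \<noteq> b"
  shows "first_difference k u v p s t a b"
proof
  have shortest_v: "\<forall>w. sim_k k w v \<longrightarrow> length v \<le> length w"
    using shortest v sim_k_trans by metis
  show "x_attr u l + y_attr u l \<le> k + 1" if "l < length u" for l
    using shortest_attr_sum_le[OF shortest that] .
  show "x_attr v l + y_attr v l \<le> k + 1" if "l < length v" for l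
    using shortest_attr_sum_le[OF shortest_v that] .
qed (use assms sim_k_sym in auto)

theorem theorem14:
  fixes k :: nat and u :: "'a::linorder list"
  assumes minlen: "\<forall>v. sim_k k v u \<longrightarrow> length u \<le> length v"
    and attr: "\<forall>i. Suc i < length u \<longrightarrow>
        (x_attr u i, y_attr u i) = (x_attr u (Suc i), y_attr u (Suc i))
        \<and> x_attr u i + y_attr u i = k + 1 \<longrightarrow> u ! i \<le> u ! Suc i"
  shows "is_shortlex_nf k u u"
  unfolding is_shortlex_nf_def
proof (intro conjI allI impI)
  show "sim_k k u u" by (simp add: sim_k_def)
next
  fix v assume "sim_k k v u" then show "length u \<le> length v" using minlen by blast
next
  fix v assume v: "sim_k k v u \<and> length v = length u"
  show "v = u \<or> lex_less u v"
  proof (rule ccontr)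
    assume "\<not> ?thesis"
    then have "lex_less v u" using lex_less_or_greater v by metis
    then obtain p b a t s where "b < a" "v = p @ b # t" "u = p @ a # s"
      unfolding lex_less_def by blast
    then interpret first_difference k u v p s t a b
      using first_difference_of_shortest[OF minlen] v by simp
    have "a \<le> b" using attr by (rule difference_letter_le)
    then show False using \<open>b < a\<close> by simp
  qed
qed

end
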